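(* Let $P$ be a finite poset with labeling $\omega:P\to\{1,\dots,p\}$ such that $P$ is $\omega$-consistent with rank function $\rho$, and assume $\omega(x)<\omega(y)$ whenever $\rho(x)<\rho(y)$. Let $x,y\in P$ be incomparable with $\rho(y)=\rho(x)+1$. Let $P'$ be the poset on the same set whose order is the transitive closure of the covering relations of $P$ together with $x\prec y$, and $P''$ the poset whose order is the transitive closure of the covering relations of $P$ together with $y\prec x$. Then $P'$ and $P''$, labeled by the same $\omega$, are $\omega$-consistent and have the same rank function $\rho$ as $(P,\omega)$.
   Context: Write $x\prec y$ if $y$ covers $x$ and $E(P)=\{(x,y):x\prec y\}$. A labeling $\omega$ induces $\epsilon:E(P)\to\{-1,1\}$ with $\epsilon(x,y)=1$ if $\omega(x)<\omega(y)$ and $-1$ otherwise. $P$ is $\epsilon$-graded ($\omega$-graded) if $\sum_{i=1}^n\epsilon(x_{i-1},x_i)$ is the same for every maximal chain $x_0\prec\cdots\prec x_n$. $P$ is $\omega$-consistent if each principal ideal $\Lambda_z=\{w\le z\}$ is graded with respect to the restriction of $\epsilon$ to $E(\Lambda_z)$; the rank function is $\rho(z)=$ this common sum for $\Lambda_z$, i.e. the $\epsilon$-weight of any saturated chain from a minimal element of $P$ to $z$. For $P'$ and $P''$, $\epsilon$ and $\rho$ are computed from their own covering relations with the same $\omega$. *)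

theory Defs
  imports Main
begin

definition poset_on :: "'a set \<Rightarrow> ('a \<Rightarrow> 'a \<Rightarrow> bool) \<Rightarrow> bool" where
  "poset_on S le \<longleftrightarrow>
     (\<forall>a\<in>S. le a a) \<and>
     (\<forall>a\<in>S. \<forall>b\<in>S. le a b \<and> le b a \<longrightarrow> a = b) \<and>
     (\<forall>a\<in>S. \<forall>b\<in>S. \<forall>c\<in>S. le a b \<and> le b c \<longrightarrow> le a c)"

definition covers :: "'a set \<Rightarrow> ('a \<Rightarrow> 'a \<Rightarrow> bool) \<Rightarrow> 'a \<Rightarrow> 'a \<Rightarrow> bool" where
  "covers S le a b \<longleftrightarrow> a \<in> S \<and> b \<in> S \<and> le a b \<and> a \<noteq> b \<and>
     \<not> (\<exists>z\<in>S. le a z \<and> le z b \<and> z \<noteq> a \<and> z \<noteq> b)"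

definition minimal_in :: "'a set \<Rightarrow> ('a \<Rightarrow> 'a \<Rightarrow> bool) \<Rightarrow> 'a \<Rightarrow> bool" where
  "minimal_in S le a \<longleftrightarrow> a \<in> S \<and> (\<forall>b\<in>S. le b a \<longrightarrow> b = a)"

definition maximal_in :: "'a set \<Rightarrow> ('a \<Rightarrow> 'a \<Rightarrow> bool) \<Rightarrow> 'a \<Rightarrow> bool" where
  "maximal_in S le a \<longleftrightarrow> a \<in> S \<and> (\<forall>b\<in>S. le a b \<longrightarrow> b = a)"

definition eps :: "('a \<Rightarrow> nat) \<Rightarrow> 'a \<Rightarrow> 'a \<Rightarrow> int" where
  "eps \<omega> a b = (if \<omega> a < \<omega> b then 1 else -1)"

definition sat_chain :: "'a set \<Rightarrow> ('a \<Rightarrow> 'a \<Rightarrow> bool) \<Rightarrow> 'a list \<Rightarrow> bool" where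
  "sat_chain S le c \<longleftrightarrow> c \<noteq> [] \<and> set c \<subseteq> S \<and>
     (\<forall>i. Suc i < length c \<longrightarrow> covers S le (c ! i) (c ! Suc i))"

definition chain_weight :: "('a \<Rightarrow> nat) \<Rightarrow> 'a list \<Rightarrow> int" where
  "chain_weight \<omega> c = (\<Sum>i<length c - 1. eps \<omega> (c ! i) (c ! Suc i))"

definition maximal_chain :: "'a set \<Rightarrow> ('a \<Rightarrow> 'a \<Rightarrow> bool) \<Rightarrow> 'a list \<Rightarrow> bool" where
  "maximal_chain S le c \<longleftrightarrow> sat_chain S le c \<and> minimal_in S le (hd c) \<and> maximal_in S le (last c)"

definition omega_graded :: "'a set \<Rightarrow> ('a \<Rightarrow> 'a \<Rightarrow> bool) \<Rightarrow> ('a \<Rightarrow> nat) \<Rightarrow> bool" where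
  "omega_graded S le \<omega> \<longleftrightarrow>
     (\<forall>c d. maximal_chain S le c \<and> maximal_chain S le d \<longrightarrow> chain_weight \<omega> c = chain_weight \<omega> d)"

definition principal_ideal :: "'a set \<Rightarrow> ('a \<Rightarrow> 'a \<Rightarrow> bool) \<Rightarrow> 'a \<Rightarrow> 'a set" where
  "principal_ideal S le z = {w \<in> S. le w z}"

definition omega_consistent :: "'a set \<Rightarrow> ('a \<Rightarrow> 'a \<Rightarrow> bool) \<Rightarrow> ('a \<Rightarrow> nat) \<Rightarrow> bool" where
  "omega_consistent S le \<omega> \<longleftrightarrow> (\<forall>z\<in>S. omega_graded (principal_ideal S le z) le \<omega>)"

definition rank :: "'a set \<Rightarrow> ('a \<Rightarrow> 'a \<Rightarrow> bool) \<Rightarrow> ('a \<Rightarrow> nat) \<Rightarrow> 'a \<Rightarrow> int" where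
  "rank S le \<omega> z = chain_weight \<omega>
     (SOME c. sat_chain S le c \<and> minimal_in S le (hd c) \<and> last c = z)"

definition add_cover :: "'a set \<Rightarrow> ('a \<Rightarrow> 'a \<Rightarrow> bool) \<Rightarrow> 'a \<Rightarrow> 'a \<Rightarrow> ('a \<Rightarrow> 'a \<Rightarrow> bool)" where
  "add_cover S le u v = (\<lambda>a b. (a, b) \<in> ({(s, t). covers S le s t} \<union> {(u, v)})\<^sup>*)"

end

theory Submission
  imports Defs
begin

text \<open>A finite poset is \<omega>-consistent with rank function f exactly when f vanishes on the
  minimal elements and f b = f a + \<epsilon>(a, b) for every cover a \<prec> b: the \<epsilon>-weight of a
  saturated chain from a minimal element then telescopes to f of its top. Every cover of P' is a
  cover of P or the new pair x \<prec> y, and every minimal element of P' is minimal in P. As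
  \<omega>(x) < \<omega>(y), the hypothesis \<rho>(y) = \<rho>(x) + 1 reads \<rho>(y) = \<rho>(x) + \<epsilon>(x, y) and also
  \<rho>(x) = \<rho>(y) + \<epsilon>(y, x), so \<rho> satisfies both conditions for P' and for P''. Incomparability
  of x and y is what keeps the two closures antisymmetric.\<close>

lemma poset_on_refl: "poset_on S R \<Longrightarrow> a \<in> S \<Longrightarrow> R a a"
  unfolding poset_on_def by blast

lemma poset_on_antisym: "poset_on S R \<Longrightarrow> a \<in> S \<Longrightarrow> b \<in> S \<Longrightarrow> R a b \<Longrightarrow> R b a \<Longrightarrow> a = b"
  unfolding poset_on_def by blast

lemma poset_on_trans:
  "poset_on S R \<Longrightarrow> a \<in> S \<Longrightarrow> b \<in> S \<Longrightarrow> c \<in> S \<Longrightarrow> R a b \<Longrightarrow> R b c \<Longrightarrow> R a c"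
  unfolding poset_on_def by blast

lemma sat_chain_subset: "sat_chain S R c \<Longrightarrow> set c \<subseteq> S"
  by (simp add: sat_chain_def)

lemma sat_chain_snoc:
  assumes "c \<noteq> []"
  shows "sat_chain S R (c @ [z]) \<longleftrightarrow> sat_chain S R c \<and> covers S R (last c) z"
proof -
  obtain m where m: "length c = Suc m"
    using assms by (cases c) auto
  have steps: "(\<forall>i. Suc i < length (c @ [z]) \<longrightarrow> covers S R ((c @ [z]) ! i) ((c @ [z]) ! Suc i)) \<longleftrightarrow>
      (\<forall>i. Suc i < length c \<longrightarrow> covers S R (c ! i) (c ! Suc i)) \<and> covers S R (last c) z"
    using m assms by (auto simp: nth_append less_Suc_eq last_conv_nth)
  have "covers S R (last c) z \<Longrightarrow> z \<in> S"
    by (simp add: covers_def)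
  then show ?thesis
    using assms unfolding sat_chain_def steps by auto
qed

lemma chain_weight_snoc:
  assumes "c \<noteq> []"
  shows "chain_weight \<omega> (c @ [z]) = chain_weight \<omega> c + eps \<omega> (last c) z"
proof -
  obtain m where m: "length c = Suc m"
    using assms by (cases c) auto
  have "chain_weight \<omega> (c @ [z]) =
      (\<Sum>i<m. eps \<omega> ((c @ [z]) ! i) ((c @ [z]) ! Suc i)) + eps \<omega> (c ! m) z"
    unfolding chain_weight_def using m by (simp add: nth_append)
  also have "(\<Sum>i<m. eps \<omega> ((c @ [z]) ! i) ((c @ [z]) ! Suc i)) = chain_weight \<omega> c"
    unfolding chain_weight_def using m by (intro sum.cong) (auto simp: nth_append)
  finally show ?thesis
    using m assms by (simp add: last_conv_nth)
qed

lemma chain_weight_telescope: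
  assumes potential: "\<And>u v. covers S R u v \<Longrightarrow> f v = f u + eps \<omega> u v"
  shows "sat_chain S R c \<Longrightarrow> chain_weight \<omega> c = f (last c) - f (hd c)"
proof (induction c rule: rev_induct)
  case Nil
  then show ?case by (simp add: sat_chain_def)
next
  case (snoc z c)
  show ?case
  proof (cases "c = []")
    case True
    then show ?thesis by (simp add: chain_weight_def)
  next
    case False
    with snoc.prems have "sat_chain S R c" "covers S R (last c) z"
      by (simp_all add: sat_chain_snoc)
    with snoc.IH False show ?thesis
      by (simp add: chain_weight_snoc potential)
  qed
qed

lemma sat_chain_le_last:
  assumes "poset_on S R"
  shows "sat_chain S R c \<Longrightarrow> a \<in> set c \<Longrightarrow> R a (last c)"
proof (induction c rule: rev_induct)
  case Nil
  then show ?case by simp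
next
  case (snoc z c)
  have "z \<in> S"
    using sat_chain_subset[OF snoc.prems(1)] by simp
  show ?case
  proof (cases "a = z")
    case True
    with \<open>z \<in> S\<close> show ?thesis by (simp add: poset_on_refl[OF assms])
  next
    case False
    with snoc.prems have "c \<noteq> []" "a \<in> set c" by auto
    with snoc.prems(1) have chain: "sat_chain S R c" and cover: "covers S R (last c) z"
      by (simp_all add: sat_chain_snoc)
    have "R a (last c)"
      by (rule snoc.IH[OF chain \<open>a \<in> set c\<close>])
    moreover have "a \<in> S"
      using sat_chain_subset[OF chain] \<open>a \<in> set c\<close> by blast
    moreover have "last c \<in> S" "R (last c) z"
      using cover by (simp_all add: covers_def)
    ultimately have "R a z"
      using poset_on_trans[OF assms _ _ \<open>z \<in> S\<close>] by blast
    then show ?thesis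
      by simp
  qed
qed

lemma card_principal_ideal_less:
  assumes "finite S" and P: "poset_on S R"
    and "a \<in> S" "b \<in> S" "R a b" "a \<noteq> b"
  shows "card (principal_ideal S R a) < card (principal_ideal S R b)"
proof (rule psubset_card_mono)
  show "finite (principal_ideal S R b)"
    using \<open>finite S\<close> by (simp add: principal_ideal_def)
  have "principal_ideal S R a \<subseteq> principal_ideal S R b"
    using assms poset_on_trans[OF P] unfolding principal_ideal_def by blast
  moreover have "b \<in> principal_ideal S R b - principal_ideal S R a"
    using assms poset_on_refl[OF P] poset_on_antisym[OF P] unfolding principal_ideal_def by blast
  ultimately show "principal_ideal S R a \<subset> principal_ideal S R b"
    by blast
qed

lemma obtain_lower_cover:
  assumes "finite S" and P: "poset_on S R" and "z \<in> S" "\<not> minimal_in S R z"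
  obtains u where "covers S R u z"
proof -
  let ?below = "{w \<in> S. R w z \<and> w \<noteq> z}"
  let ?less = "\<lambda>a b. R a b \<and> a \<noteq> b"
  have "?below \<noteq> {}"
    using assms unfolding minimal_in_def by blast
  moreover have "asymp_on ?below ?less"
    using poset_on_antisym[OF P] unfolding asymp_on_def by blast
  moreover have "transp_on ?below ?less"
    using poset_on_trans[OF P] poset_on_antisym[OF P] unfolding transp_on_def by blast
  ultimately obtain u where u: "u \<in> ?below" and max: "\<forall>w \<in> ?below. w \<noteq> u \<longrightarrow> \<not> ?less u w"
    using Finite_Set.bex_max_element[of ?below ?less] \<open>finite S\<close> by auto
  have "covers S R u z"
    using u max \<open>z \<in> S\<close> unfolding covers_def by blast
  then show thesis ..
qed

definition rooted_chain :: "'a set \<Rightarrow> ('a \<Rightarrow> 'a \<Rightarrow> bool) \<Rightarrow> 'a list \<Rightarrow> bool" where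
  "rooted_chain S R c \<longleftrightarrow> sat_chain S R c \<and> minimal_in S R (hd c)"

lemma rooted_chain_last_in: "rooted_chain S R c \<Longrightarrow> last c \<in> S"
  unfolding rooted_chain_def sat_chain_def by auto

lemma rooted_chain_snoc:
  assumes "rooted_chain S R c" and "covers S R (last c) z"
  shows "rooted_chain S R (c @ [z])"
proof -
  have "c \<noteq> []"
    using assms(1) by (simp add: rooted_chain_def sat_chain_def)
  then show ?thesis
    using assms by (simp add: rooted_chain_def sat_chain_snoc)
qed

lemma rooted_chain_singleton: "minimal_in S R m \<Longrightarrow> rooted_chain S R [m]"
  unfolding rooted_chain_def sat_chain_def minimal_in_def by simp

lemma exists_rooted_chain:
  assumes "finite S" and P: "poset_on S R"
  shows "z \<in> S \<Longrightarrow> \<exists>c. rooted_chain S R c \<and> last c = z"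
proof (induction z rule: measure_induct_rule[of "\<lambda>a. card (principal_ideal S R a)"])
  case (less z)
  show ?case
  proof (cases "minimal_in S R z")
    case True
    then show ?thesis
      using rooted_chain_singleton by (intro exI[of _ "[z]"]) simp
  next
    case False
    then obtain u where cover: "covers S R u z"
      using obtain_lower_cover[OF assms less.prems] by blast
    then have "u \<in> S" "R u z" "u \<noteq> z"
      by (simp_all add: covers_def)
    then have "card (principal_ideal S R u) < card (principal_ideal S R z)"
      by (rule card_principal_ideal_less[OF assms _ less.prems])
    then obtain c where "rooted_chain S R c" "last c = u"
      using less.IH \<open>u \<in> S\<close> by blast
    then have "rooted_chain S R (c @ [z])"
      using rooted_chain_snoc[of S R c z] cover by simp
    then show ?thesis
      by (intro exI[of _ "c @ [z]"]) simp
  qed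
qed

lemma covers_principal_ideal_iff:
  assumes P: "poset_on S R" and "z \<in> S"
    and "a \<in> principal_ideal S R z" "b \<in> principal_ideal S R z"
  shows "covers (principal_ideal S R z) R a b \<longleftrightarrow> covers S R a b"
proof -
  have "w \<in> principal_ideal S R z" if "w \<in> S" "R w b" for w
    using that assms poset_on_trans[OF P, of w b z] unfolding principal_ideal_def by blast
  then show ?thesis
    using assms unfolding covers_def principal_ideal_def by blast
qed

lemma minimal_in_principal_ideal_iff:
  assumes P: "poset_on S R" and "z \<in> S" and "m \<in> principal_ideal S R z"
  shows "minimal_in (principal_ideal S R z) R m \<longleftrightarrow> minimal_in S R m"
proof -
  have "w \<in> principal_ideal S R z" if "w \<in> S" "R w m" for w
    using that assms poset_on_trans[OF P, of w m z] unfolding principal_ideal_def by blast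
  then show ?thesis
    using assms unfolding minimal_in_def principal_ideal_def by blast
qed

lemma maximal_in_principal_ideal_iff:
  assumes P: "poset_on S R" and "z \<in> S"
  shows "maximal_in (principal_ideal S R z) R m \<longleftrightarrow> m = z"
  using assms poset_on_refl[OF P, of z] poset_on_antisym[OF P]
  unfolding maximal_in_def principal_ideal_def by blast

lemma sat_chain_principal_ideal_iff:
  assumes P: "poset_on S R" and "z \<in> S" and "set c \<subseteq> principal_ideal S R z"
  shows "sat_chain (principal_ideal S R z) R c \<longleftrightarrow> sat_chain S R c"
proof -
  have "covers (principal_ideal S R z) R (c ! i) (c ! Suc i) \<longleftrightarrow> covers S R (c ! i) (c ! Suc i)"
    if "Suc i < length c" for i
    using that assms(3) covers_principal_ideal_iff[OF P \<open>z \<in> S\<close>] nth_mem[of i c] nth_mem[of "Suc i" c]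
    by (meson Suc_lessD subsetD)
  moreover have "principal_ideal S R z \<subseteq> S"
    by (auto simp: principal_ideal_def)
  ultimately show ?thesis
    using assms(3) unfolding sat_chain_def by blast
qed

lemma maximal_chain_principal_ideal_iff:
  assumes P: "poset_on S R" and "z \<in> S"
  shows "maximal_chain (principal_ideal S R z) R c \<longleftrightarrow> rooted_chain S R c \<and> last c = z"
proof -
  have "set c \<subseteq> principal_ideal S R z"
    if "sat_chain (principal_ideal S R z) R c \<or> rooted_chain S R c \<and> last c = z"
    using that sat_chain_le_last[OF P, of c] unfolding sat_chain_def rooted_chain_def principal_ideal_def
    by blast
  moreover have "hd c \<in> set c" if "sat_chain T R c" for T
    using that hd_in_set unfolding sat_chain_def by blast
  ultimately show ?thesis
    unfolding maximal_chain_def rooted_chain_def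
    using sat_chain_principal_ideal_iff[OF assms] minimal_in_principal_ideal_iff[OF assms]
      maximal_in_principal_ideal_iff[OF assms] by blast
qed

lemma omega_consistent_iff_rooted_chains:
  assumes "poset_on S R"
  shows "omega_consistent S R \<omega> \<longleftrightarrow>
    (\<forall>c d. rooted_chain S R c \<and> rooted_chain S R d \<and> last c = last d \<longrightarrow>
       chain_weight \<omega> c = chain_weight \<omega> d)"
  unfolding omega_consistent_def omega_graded_def
  using maximal_chain_principal_ideal_iff[OF assms] rooted_chain_last_in by metis

lemma rank_eq_chain_weight:
  assumes P: "poset_on S R" and "omega_consistent S R \<omega>" and "rooted_chain S R c"
  shows "rank S R \<omega> (last c) = chain_weight \<omega> c"
proof -
  let ?d = "SOME d. rooted_chain S R d \<and> last d = last c"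
  have "rooted_chain S R ?d \<and> last ?d = last c"
    using someI[of "\<lambda>d. rooted_chain S R d \<and> last d = last c"] assms(3) by blast
  then have "chain_weight \<omega> ?d = chain_weight \<omega> c"
    using assms omega_consistent_iff_rooted_chains[OF P] by blast
  then show ?thesis
    unfolding rank_def rooted_chain_def by (simp add: conj_assoc)
qed

definition is_rank_function :: "'a set \<Rightarrow> ('a \<Rightarrow> 'a \<Rightarrow> bool) \<Rightarrow> ('a \<Rightarrow> nat) \<Rightarrow> ('a \<Rightarrow> int) \<Rightarrow> bool"
  where "is_rank_function S R \<omega> f \<longleftrightarrow>
    (\<forall>m. minimal_in S R m \<longrightarrow> f m = 0) \<and> (\<forall>u v. covers S R u v \<longrightarrow> f v = f u + eps \<omega> u v)"

lemma rank_is_rank_function: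
  assumes "finite S" and P: "poset_on S R" and C: "omega_consistent S R \<omega>"
  shows "is_rank_function S R \<omega> (rank S R \<omega>)"
  unfolding is_rank_function_def
proof (intro conjI allI impI)
  fix m
  assume "minimal_in S R m"
  then show "rank S R \<omega> m = 0"
    using rank_eq_chain_weight[OF P C rooted_chain_singleton] by (simp add: chain_weight_def)
next
  fix u v
  assume cover: "covers S R u v"
  then obtain c where c: "rooted_chain S R c" "last c = u"
    using exists_rooted_chain[OF assms(1,2)] by (auto simp: covers_def)
  have "c \<noteq> []"
    using c(1) by (simp add: rooted_chain_def sat_chain_def)
  have "rank S R \<omega> v = chain_weight \<omega> (c @ [v])"
    using rank_eq_chain_weight[OF P C rooted_chain_snoc[OF c(1)]] cover c(2) by simp
  also have "\<dots> = rank S R \<omega> u + eps \<omega> u v"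
    using chain_weight_snoc[OF \<open>c \<noteq> []\<close>] rank_eq_chain_weight[OF P C c(1)] c(2) by simp
  finally show "rank S R \<omega> v = rank S R \<omega> u + eps \<omega> u v" .
qed

lemma omega_consistent_if_rank_function:
  assumes "finite S" and P: "poset_on S R" and f: "is_rank_function S R \<omega> f"
  shows "omega_consistent S R \<omega> \<and> (\<forall>z\<in>S. rank S R \<omega> z = f z)"
proof
  have weight: "chain_weight \<omega> c = f (last c)" if "rooted_chain S R c" for c
    using that f chain_weight_telescope[of S R f \<omega> c]
    unfolding is_rank_function_def rooted_chain_def by simp
  then show consistent: "omega_consistent S R \<omega>"
    using omega_consistent_iff_rooted_chains[OF P] by simp
  show "\<forall>z\<in>S. rank S R \<omega> z = f z"
  proof
    fix z
    assume "z \<in> S"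
    then obtain c where "rooted_chain S R c" "last c = z"
      using exists_rooted_chain[OF assms(1,2)] by blast
    then show "rank S R \<omega> z = f z"
      using rank_eq_chain_weight[OF P consistent] weight by metis
  qed
qed

lemma antisym_rtrancl_insert:
  assumes "antisym (r\<^sup>*)" and "(v, u) \<notin> r\<^sup>*"
  shows "antisym ((insert (u, v) r)\<^sup>*)"
proof (rule antisymI)
  fix a b
  assume ab: "(a, b) \<in> (insert (u, v) r)\<^sup>*" and ba: "(b, a) \<in> (insert (u, v) r)\<^sup>*"
  txt \<open>A cycle through the new edge would close up to a path from v to u.\<close>
  have "(v, u) \<notin> (insert (u, v) r)\<^sup>*"
    using assms(2) by (simp add: rtrancl_insert)
  then have "(a, b) \<in> r\<^sup>*" "(b, a) \<in> r\<^sup>*"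
    using ab ba by (auto simp: rtrancl_insert dest: rtrancl_trans)
  then show "a = b"
    by (rule antisymD[OF assms(1)])
qed

lemma covers_rtrancl_in:
  assumes "r \<subseteq> S \<times> S" and "irrefl r" and "covers S (\<lambda>a b. (a, b) \<in> r\<^sup>*) a b"
  shows "(a, b) \<in> r"
proof -
  from assms(3) have "(a, b) \<in> r\<^sup>*" "a \<noteq> b"
    by (simp_all add: covers_def)
  then obtain w where "(a, w) \<in> r" "(w, b) \<in> r\<^sup>*"
    by (metis converse_rtranclE)
  moreover from this assms(1,2) have "w \<in> S" "w \<noteq> a"
    by (auto simp: irrefl_def)
  ultimately have "w = b"
    using assms(3) unfolding covers_def by blast
  with \<open>(a, w) \<in> r\<close> show ?thesis
    by simp
qed

lemma covers_trancl_le: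
  assumes P: "poset_on S R" and "(a, b) \<in> {(s, t). covers S R s t}\<^sup>+"
  shows "a \<in> S \<and> b \<in> S \<and> R a b"
  using assms(2)
proof (induction rule: trancl_induct)
  case (base b)
  then show ?case
    by (simp add: covers_def)
next
  case (step b c)
  then show ?case
    using poset_on_trans[OF P, of a b c] by (simp add: covers_def)
qed

lemma add_cover_iff:
  "add_cover S R u v a b \<longleftrightarrow> (a, b) \<in> (insert (u, v) {(s, t). covers S R s t})\<^sup>*"
  by (simp add: add_cover_def)

lemma poset_on_add_cover:
  assumes P: "poset_on S R" and "u \<in> S" "v \<in> S" "\<not> R v u"
  shows "poset_on S (add_cover S R u v)"
proof -
  let ?C = "{(s, t). covers S R s t}"
  have "antisym (?C\<^sup>*)"
  proof (rule antisymI)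
    fix a b
    assume "(a, b) \<in> ?C\<^sup>*" "(b, a) \<in> ?C\<^sup>*"
    then show "a = b"
      using covers_trancl_le[OF P] poset_on_antisym[OF P] by (metis rtrancl_eq_or_trancl)
  qed
  moreover have "(v, u) \<notin> ?C\<^sup>*"
    using assms covers_trancl_le[OF P, of v u] poset_on_refl[OF P, of v]
    by (auto simp: rtrancl_eq_or_trancl)
  ultimately have "antisym ((insert (u, v) ?C)\<^sup>*)"
    by (rule antisym_rtrancl_insert)
  then show ?thesis
    unfolding poset_on_def add_cover_iff by (auto dest: antisymD rtrancl_trans)
qed

lemma covers_add_cover:
  assumes P: "poset_on S R" and "u \<in> S" "v \<in> S" "\<not> R u v"
    and "covers S (add_cover S R u v) a b"
  shows "covers S R a b \<or> (a, b) = (u, v)"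
proof -
  let ?E = "insert (u, v) {(s, t). covers S R s t}"
  have "?E \<subseteq> S \<times> S"
    using assms(2,3) by (auto simp: covers_def)
  moreover have "irrefl ?E"
    using assms(2,4) poset_on_refl[OF P] by (auto simp: irrefl_def covers_def)
  moreover have "covers S (\<lambda>a b. (a, b) \<in> ?E\<^sup>*) a b"
    using assms(5) by (simp add: add_cover_def)
  ultimately have "(a, b) \<in> ?E"
    by (rule covers_rtrancl_in)
  then show ?thesis
    by auto
qed

lemma minimal_in_add_cover:
  assumes "finite S" and "poset_on S R" and "minimal_in S (add_cover S R u v) m"
  shows "minimal_in S R m"
proof (rule ccontr)
  assume "\<not> minimal_in S R m"
  moreover have "m \<in> S"
    using assms(3) by (simp add: minimal_in_def)
  ultimately obtain w where "covers S R w m"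
    using obtain_lower_cover[OF assms(1,2)] by blast
  then have "w \<in> S" "add_cover S R u v w m" "w \<noteq> m"
    by (auto simp: covers_def add_cover_iff)
  then show False
    using assms(3) by (auto simp: minimal_in_def)
qed

lemma rank_is_rank_function_add_cover:
  assumes "finite S" and P: "poset_on S R" and C: "omega_consistent S R \<omega>"
    and "u \<in> S" "v \<in> S" "\<not> R u v"
    and "rank S R \<omega> v = rank S R \<omega> u + eps \<omega> u v"
  shows "is_rank_function S (add_cover S R u v) \<omega> (rank S R \<omega>)"
proof -
  have "is_rank_function S R \<omega> (rank S R \<omega>)"
    using rank_is_rank_function[OF assms(1-3)] .
  then show ?thesis
    using assms minimal_in_add_cover[OF assms(1,2)] covers_add_cover[OF P assms(4-6)]
    unfolding is_rank_function_def by blast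
qed

theorem lemma3p1:
  fixes S :: "'a set" and le :: "'a \<Rightarrow> 'a \<Rightarrow> bool" and \<omega> :: "'a \<Rightarrow> nat" and x y :: 'a
  assumes "finite S"
    and "poset_on S le"
    and "bij_betw \<omega> S {1..card S}"
    and "omega_consistent S le \<omega>"
    and "\<forall>a\<in>S. \<forall>b\<in>S. rank S le \<omega> a < rank S le \<omega> b \<longrightarrow> \<omega> a < \<omega> b"
    and "x \<in> S" and "y \<in> S" and "\<not> le x y" and "\<not> le y x"
    and "rank S le \<omega> y = rank S le \<omega> x + 1"
  shows "omega_consistent S (add_cover S le x y) \<omega> \<and>
         (\<forall>z\<in>S. rank S (add_cover S le x y) \<omega> z = rank S le \<omega> z) \<and>
         omega_consistent S (add_cover S le y x) \<omega> \<and>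
         (\<forall>z\<in>S. rank S (add_cover S le y x) \<omega> z = rank S le \<omega> z)"
proof -
  have "\<omega> x < \<omega> y"
    using assms(5-7,10) by simp
  then have "rank S le \<omega> y = rank S le \<omega> x + eps \<omega> x y"
    and "rank S le \<omega> x = rank S le \<omega> y + eps \<omega> y x"
    using assms(10) by (simp_all add: eps_def)
  then have "is_rank_function S (add_cover S le x y) \<omega> (rank S le \<omega>)"
    and "is_rank_function S (add_cover S le y x) \<omega> (rank S le \<omega>)"
    using rank_is_rank_function_add_cover[OF assms(1,2,4)] assms(6-9) by simp_all
  moreover have "poset_on S (add_cover S le x y)" and "poset_on S (add_cover S le y x)"
    using poset_on_add_cover[OF assms(2)] assms(6-9) by simp_all
  ultimately show ?thesis
    using omega_consistent_if_rank_function[OF assms(1)] by blast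
qed

end
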